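(* Let $N\ge 1$ and let $b$ be an atomic program term. For each $m\in\{1,\ldots,N\}$ let $\mathfrak{M}_m$ and $A_m$ be as defined in the context. Then for all $k,m\in\{1,\ldots,N\}$ and every state $x$ of $\mathfrak{M}_k$: $\mathfrak{M}_k,x\models A_m$ if, and only if, $k=m$ and $x=r_m$.
   Context: IPDL formulas are built from propositional variables, $\bot$, $\rightarrow$ and box modalities $[\alpha]$ indexed by program terms built from atomic program terms; $\top=\neg\bot$ and $\langle\alpha\rangle\psi=\neg[\alpha]\neg\psi$. A Kripke model is $(S,\{R_a\}_{a\in AP},V)$ with $S$ a nonempty set, binary relations $R_a$ on $S$ for each atomic program $a$, and valuation $V$; $\mathfrak{M},s\models[a]\psi$ iff $\psi$ holds at every $t$ with $(s,t)\in R_a$, and Boolean connectives are classical. For $m\ge 1$, $\mathfrak{M}_m=(S_m,\{R_a\}_{a\in AP},V_m)$ where $S_m=\{r_m,t^m,s^m_1,\ldots,s^m_m\}$ (distinct states), $R_b$ is the transitive closure of $\{(r_m,t^m),(t^m,t^m),(r_m,s^m_1)\}\cup\{(s^m_i,s^m_{i+1}):1\le i\le m-1\}$, $R_a=\varnothing$ for $a\neq b$, and $V_m(p)=\varnothing$ for every variable $p$. Define $\langle b\rangle^0\psi=\psi$, $\langle b\rangle^{j+1}\psi=\langle b\rangle\langle b\rangle^j\psi$, and $$A_m=\langle b\rangle^m[b]\bot\wedge\neg\langle b\rangle^{m+1}[b]\bot\wedge\langle b\rangle(\langle b\rangle\top\wedge[b]\langle b\rangle\top).$$ *)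

theory Defs
  imports Main
begin

datatype 'a prog =
    Atom 'a
  | Comp "'a prog" "'a prog"
  | Choice "'a prog" "'a prog"
  | Star "'a prog"
  | Inter "'a prog" "'a prog"

datatype ('p, 'a) fm =
    Var 'p
  | Bot
  | Imp "('p, 'a) fm" "('p, 'a) fm"
  | Box "'a prog" "('p, 'a) fm"

definition Neg :: "('p, 'a) fm \<Rightarrow> ('p, 'a) fm" where
  "Neg \<phi> = Imp \<phi> Bot"

definition Top :: "('p, 'a) fm" where
  "Top = Neg Bot"

definition Dia :: "'a prog \<Rightarrow> ('p, 'a) fm \<Rightarrow> ('p, 'a) fm" where
  "Dia \<alpha> \<phi> = Neg (Box \<alpha> (Neg \<phi>))"

definition Conj :: "('p, 'a) fm \<Rightarrow> ('p, 'a) fm \<Rightarrow> ('p, 'a) fm" where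
  "Conj \<phi> \<psi> = Neg (Imp \<phi> (Neg \<psi>))"

record ('s, 'p, 'a) kmodel =
  St :: "'s set"
  Rel :: "'a \<Rightarrow> ('s \<times> 's) set"
  Val :: "'p \<Rightarrow> 's set"

fun prel :: "('s, 'p, 'a) kmodel \<Rightarrow> 'a prog \<Rightarrow> ('s \<times> 's) set" where
  "prel M (Atom a) = Rel M a"
| "prel M (Comp \<alpha> \<beta>) = prel M \<alpha> O prel M \<beta>"
| "prel M (Choice \<alpha> \<beta>) = prel M \<alpha> \<union> prel M \<beta>"
| "prel M (Star \<alpha>) = Id_on (St M) \<union> (prel M \<alpha>)\<^sup>+"
| "prel M (Inter \<alpha> \<beta>) = prel M \<alpha> \<inter> prel M \<beta>"

fun sat :: "('s, 'p, 'a) kmodel \<Rightarrow> 's \<Rightarrow> ('p, 'a) fm \<Rightarrow> bool" where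
  "sat M s (Var p) = (s \<in> Val M p)"
| "sat M s Bot = False"
| "sat M s (Imp \<phi> \<psi>) = (sat M s \<phi> \<longrightarrow> sat M s \<psi>)"
| "sat M s (Box \<alpha> \<phi>) = (\<forall>t. (s, t) \<in> prel M \<alpha> \<longrightarrow> sat M t \<phi>)"

text \<open>States: Rs m = r_m, Ts m = t^m, Ss m i = s^m_i (distinct by construction).\<close>
datatype st = Rs nat | Ts nat | Ss nat nat

definition Mm :: "'a \<Rightarrow> nat \<Rightarrow> (st, 'p, 'a) kmodel" where
  "Mm b m = \<lparr> St = {Rs m, Ts m} \<union> {Ss m i | i. 1 \<le> i \<and> i \<le> m},
             Rel = (\<lambda>a. if a = b then
                        ({(Rs m, Ts m), (Ts m, Ts m), (Rs m, Ss m 1)}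
                         \<union> {(Ss m i, Ss m (i + 1)) | i. 1 \<le> i \<and> i \<le> m - 1})\<^sup>+
                      else {}),
             Val = (\<lambda>p. {}) \<rparr>"

fun dia_pow :: "'a \<Rightarrow> nat \<Rightarrow> ('p, 'a) fm \<Rightarrow> ('p, 'a) fm" where
  "dia_pow b 0 \<psi> = \<psi>"
| "dia_pow b (Suc j) \<psi> = Dia (Atom b) (dia_pow b j \<psi>)"

definition Am :: "'a \<Rightarrow> nat \<Rightarrow> ('p, 'a) fm" where
  "Am b m = Conj (dia_pow b m (Box (Atom b) Bot))
             (Conj (Neg (dia_pow b (m + 1) (Box (Atom b) Bot)))
                   (Dia (Atom b) (Conj (Dia (Atom b) Top) (Box (Atom b) (Dia (Atom b) Top)))))"

end

theory Submission
  imports Defs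
begin

text \<open>
  In \<open>\<M>\<^sub>k\<close> the only dead end is \<open>s\<^sup>k\<^sub>k\<close>; it lies exactly \<open>k - i\<close> steps beyond \<open>s\<^sup>k\<^sub>i\<close>
  and at every distance \<open>1, \<dots>, k\<close> from \<open>r\<^sub>k\<close>, while it cannot be reached from the
  reflexive state \<open>t\<^sup>k\<close>. Hence \<open>\<langle>b\<rangle>\<^sup>j[b]\<bottom>\<close> holds at \<open>r\<^sub>k\<close> iff \<open>1 \<le> j \<le> k\<close>, so the first
  two conjuncts of \<open>A\<^sub>m\<close> pin down \<open>k = m\<close> at the root and fail at \<open>t\<^sup>k\<close>. The third
  conjunct asks for a successor none of whose successors is a dead end: \<open>t\<^sup>k\<close> serves
  at the root, but every \<open>s\<^sup>k\<^sub>i\<close> only sees states from which \<open>s\<^sup>k\<^sub>k\<close> is at most one step away.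
\<close>

lemma sat_Neg [simp]: "sat M s (Neg \<phi>) \<longleftrightarrow> \<not> sat M s \<phi>"
  by (simp add: Neg_def)

lemma sat_Top [simp]: "sat M s Top"
  by (simp add: Top_def)

lemma sat_Dia [simp]: "sat M s (Dia \<alpha> \<phi>) \<longleftrightarrow> (\<exists>t. (s, t) \<in> prel M \<alpha> \<and> sat M t \<phi>)"
  by (simp add: Dia_def)

lemma sat_Conj [simp]: "sat M s (Conj \<phi> \<psi>) \<longleftrightarrow> sat M s \<phi> \<and> sat M s \<psi>"
  by (simp add: Conj_def)

definition Mm_step :: "nat \<Rightarrow> (st \<times> st) set" where
  "Mm_step m = {(Rs m, Ts m), (Ts m, Ts m), (Rs m, Ss m 1)}
     \<union> {(Ss m i, Ss m (i + 1)) | i. 1 \<le> i \<and> i \<le> m - 1}"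

definition Mm_reach :: "nat \<Rightarrow> (st \<times> st) set" where
  "Mm_reach m = {(Rs m, Ts m), (Ts m, Ts m)} \<union> {(Rs m, Ss m j) | j. 1 \<le> j \<and> j \<le> m}
     \<union> {(Ss m i, Ss m j) | i j. 1 \<le> i \<and> i < j \<and> j \<le> m}"

lemma Ss_chain_in_trancl_Mm_step:
  assumes "1 \<le> i" "i < j" "j \<le> m"
  shows "(Ss m i, Ss m j) \<in> (Mm_step m)\<^sup>+"
proof -
  have "Suc i \<le> j" using \<open>i < j\<close> by simp
  then show ?thesis
  proof (induction j rule: dec_induct)
    case base
    then show ?case using \<open>1 \<le> i\<close> \<open>i < j\<close> \<open>j \<le> m\<close> by (auto simp: Mm_step_def)
  next
    case (step n)
    then have "(Ss m n, Ss m (Suc n)) \<in> Mm_step m"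
      using \<open>1 \<le> i\<close> \<open>j \<le> m\<close> by (auto simp: Mm_step_def)
    then show ?case using step.IH by (meson trancl_into_trancl)
  qed
qed

lemma trancl_Mm_step:
  assumes "1 \<le> m"
  shows "(Mm_step m)\<^sup>+ = Mm_reach m"
proof
  show "(Mm_step m)\<^sup>+ \<subseteq> Mm_reach m"
  proof (rule subrelI)
    fix x y
    assume "(x, y) \<in> (Mm_step m)\<^sup>+"
    then show "(x, y) \<in> Mm_reach m"
      by (induction rule: trancl_induct) (use assms in \<open>auto simp: Mm_step_def Mm_reach_def\<close>)
  qed
next
  have root_Ss1: "(Rs m, Ss m 1) \<in> (Mm_step m)\<^sup>+"
    by (auto simp: Mm_step_def)
  have root_Ss: "(Rs m, Ss m j) \<in> (Mm_step m)\<^sup>+" if "1 \<le> j" "j \<le> m" for j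
  proof (cases "j = 1")
    case False
    then show ?thesis
      using root_Ss1 Ss_chain_in_trancl_Mm_step[of 1 j m] that by (auto intro: trancl_trans)
  qed (use root_Ss1 in simp)
  show "Mm_reach m \<subseteq> (Mm_step m)\<^sup>+"
    using root_Ss Ss_chain_in_trancl_Mm_step by (auto simp: Mm_reach_def Mm_step_def)
qed

lemma Rel_Mm: "1 \<le> k \<Longrightarrow> Rel (Mm b k) b = Mm_reach k"
  using trancl_Mm_step[of k] by (simp add: Mm_def Mm_step_def)

lemma Rel_Mm_Rs:
  "1 \<le> k \<Longrightarrow> (Rs k, y) \<in> Rel (Mm b k) b \<longleftrightarrow> y = Ts k \<or> (\<exists>l. y = Ss k l \<and> 1 \<le> l \<and> l \<le> k)"
  by (auto simp: Rel_Mm Mm_reach_def)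

lemma Rel_Mm_Ts: "1 \<le> k \<Longrightarrow> (Ts k, y) \<in> Rel (Mm b k) b \<longleftrightarrow> y = Ts k"
  by (auto simp: Rel_Mm Mm_reach_def)

lemma Rel_Mm_Ss:
  "1 \<le> k \<Longrightarrow> 1 \<le> i \<Longrightarrow> (Ss k i, y) \<in> Rel (Mm b k) b \<longleftrightarrow> (\<exists>l. y = Ss k l \<and> i < l \<and> l \<le> k)"
  by (auto simp: Rel_Mm Mm_reach_def)

lemma not_sat_Mm_Ts_dia_pow: "1 \<le> k \<Longrightarrow> \<not> sat (Mm b k) (Ts k) (dia_pow b j (Box (Atom b) Bot))"
  by (induction j) (auto simp: Rel_Mm_Ts)

lemma sat_Mm_Ss_dia_pow:
  fixes b :: 'a
  assumes "1 \<le> i" "i \<le> k"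
  shows "sat (Mm b k :: (st, 'p, 'a) kmodel) (Ss k i) (dia_pow b j (Box (Atom b) Bot))
    \<longleftrightarrow> j \<le> k - i \<and> (j = 0 \<longrightarrow> i = k)"
  using assms
proof (induction j arbitrary: i)
  case 0
  then show ?case by (auto simp: Rel_Mm_Ss)
next
  case (Suc j)
  let ?M = "Mm b k :: (st, 'p, 'a) kmodel"
  have "sat ?M (Ss k i) (dia_pow b (Suc j) (Box (Atom b) Bot))
    \<longleftrightarrow> (\<exists>l. i < l \<and> l \<le> k \<and> sat ?M (Ss k l) (dia_pow b j (Box (Atom b) Bot)))"
    using Suc.prems by (auto simp: Rel_Mm_Ss)
  also have "\<dots> \<longleftrightarrow> (\<exists>l. i < l \<and> l \<le> k \<and> j \<le> k - l \<and> (j = 0 \<longrightarrow> l = k))"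
    using Suc.prems by (simp add: Suc.IH cong: conj_cong)
  also have "\<dots> \<longleftrightarrow> Suc j \<le> k - i"
    by (auto intro!: exI[of _ "k - j"])
  finally show ?case by simp
qed

lemma sat_Mm_Rs_dia_pow:
  fixes b :: 'a
  assumes "1 \<le> k"
  shows "sat (Mm b k :: (st, 'p, 'a) kmodel) (Rs k) (dia_pow b j (Box (Atom b) Bot))
    \<longleftrightarrow> 0 < j \<and> j \<le> k"
proof (cases j)
  case 0
  then show ?thesis using assms by (auto simp: Rel_Mm_Rs)
next
  case (Suc n)
  let ?M = "Mm b k :: (st, 'p, 'a) kmodel"
  have "sat ?M (Rs k) (dia_pow b (Suc n) (Box (Atom b) Bot))
    \<longleftrightarrow> (\<exists>l. 1 \<le> l \<and> l \<le> k \<and> sat ?M (Ss k l) (dia_pow b n (Box (Atom b) Bot)))"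
    using assms by (auto simp: Rel_Mm_Rs not_sat_Mm_Ts_dia_pow)
  also have "\<dots> \<longleftrightarrow> (\<exists>l. 1 \<le> l \<and> l \<le> k \<and> n \<le> k - l \<and> (n = 0 \<longrightarrow> l = k))"
    by (simp add: sat_Mm_Ss_dia_pow cong: conj_cong)
  also have "\<dots> \<longleftrightarrow> Suc n \<le> k"
    by (auto intro!: exI[of _ "k - n"])
  finally show ?thesis using Suc by simp
qed

lemma sat_Mm_Rs_dia_live_successor:
  assumes "1 \<le> k"
  shows "sat (Mm b k) (Rs k)
    (Dia (Atom b) (Conj (Dia (Atom b) Top) (Box (Atom b) (Dia (Atom b) Top))))"
  using assms by (auto simp: Rel_Mm_Rs Rel_Mm_Ts)

lemma not_sat_Mm_Ss_dia_live_successor: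
  fixes b :: 'a
  assumes "1 \<le> i" "i \<le> k"
  shows "\<not> sat (Mm b k :: (st, 'p, 'a) kmodel) (Ss k i)
    (Dia (Atom b) (Conj (Dia (Atom b) Top) (Box (Atom b) (Dia (Atom b) Top))))"
proof
  let ?M = "Mm b k :: (st, 'p, 'a) kmodel"
  assume "sat ?M (Ss k i)
    (Dia (Atom b) (Conj (Dia (Atom b) Top) (Box (Atom b) (Dia (Atom b) Top))))"
  then obtain y where "(Ss k i, y) \<in> Rel ?M b" "\<exists>z. (y, z) \<in> Rel ?M b"
    and live: "\<forall>z. (y, z) \<in> Rel ?M b \<longrightarrow> (\<exists>w. (z, w) \<in> Rel ?M b)"
    by auto
  then obtain l where "y = Ss k l" "i < l" "l < k"
    using assms by (auto simp: Rel_Mm_Ss)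
  then have "(y, Ss k k) \<in> Rel ?M b"
    using assms by (simp add: Rel_Mm_Ss)
  moreover have "(Ss k k, w) \<notin> Rel ?M b" for w
    using assms by (simp add: Rel_Mm_Ss)
  ultimately show False
    using live by blast
qed

theorem lemma2:
  fixes b :: 'a and N k m :: nat and x :: st
  assumes "N \<ge> 1"
    and "k \<in> {1..N}" and "m \<in> {1..N}"
    and "x \<in> St (Mm b k :: (st, 'p, 'a) kmodel)"
  shows "sat (Mm b k :: (st, 'p, 'a) kmodel) x (Am b m) \<longleftrightarrow> (k = m \<and> x = Rs m)"
proof -
  have k: "1 \<le> k" and m: "1 \<le> m" using assms(2,3) by auto
  consider "x = Rs k" | "x = Ts k" | i where "x = Ss k i" "1 \<le> i" "i \<le> k"
    using assms(4) by (auto simp: Mm_def)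
  then show ?thesis
  proof cases
    case 1
    then show ?thesis
      using m by (simp add: Am_def sat_Mm_Rs_dia_pow[OF k] sat_Mm_Rs_dia_live_successor[OF k]
          del: sat_Dia dia_pow.simps) arith
  next
    case 2
    then show ?thesis by (simp add: Am_def not_sat_Mm_Ts_dia_pow[OF k] del: dia_pow.simps)
  next
    case 3
    then show ?thesis
      by (simp add: Am_def not_sat_Mm_Ss_dia_live_successor[OF 3(2,3)] del: sat_Dia dia_pow.simps)
  qed
qed

end
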